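(* $V_{\mathcal J}=M_r$; that is, the subspace of $M_r$ spanned by all vectors $L_r^{i_1j_1}(m_1)\cdots L_r^{i_pj_p}(m_p)\mathbf 1$ ($p\ge 0$, $1\le i_q,j_q\le d$, $m_q\in\mathbb Z$) is all of $M_r$.
   Context: Fix an integer $d\ge 2$ and $r\in\mathbb{C}$. Let $\hat{\mathfrak h}$ be the complex Lie algebra with basis $\{v^i(m)\mid 1\le i\le d,\ m\in\mathbb{Z}\}\cup\{\mathbf c\}$ and bracket $[v^i(m),v^j(n)]=\delta_{m+n,0}\delta_{i,j}\,m\,\mathbf c$, $[\mathbf c,\hat{\mathfrak h}]=0$. In $A=U(\hat{\mathfrak h})/\langle \mathbf c-1\rangle$ let $v^{ij}(m,n)$ be the image of $v^i(m)v^j(n)$; then $v^{ij}(m,n)=v^{ji}(n,m)$ unless $i=j$ and $m=-n$, and $v^{ii}(m,-m)=v^{ii}(-m,m)+m$. Let $\mathcal B=\{v^{ii}(m,n)\mid 1\le i\le d,\ m\le n\}\cup\{v^{ij}(m,n)\mid 1\le i<j\le d,\ m,n\in\mathbb Z\}$; then $\mathcal B\cup\{1\}$ is linearly independent, $\mathcal L:=\mathrm{span}_{\mathbb C}\mathcal B\oplus\mathbb C\subset A$ contains every $v^{ij}(m,n)$ and is closed under $[x,y]=xy-yx$. With $\pi_1,\pi_2$ the projections of $\mathcal L$ onto $\mathrm{span}\,\mathcal B$ and onto $\mathbb C$, $[x,y]_r=\pi_1([x,y])+r\pi_2([x,y])$ is a Lie bracket on $\mathcal L$; call this Lie algebra $\mathcal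 L_r$. Let $\mathcal B_+=\{v^{ij}(m,n)\in\mathcal B\mid m\ge 0\text{ or }n\ge 0\}$, $\mathcal B_-=\{v^{ij}(m,n)\in\mathcal B\mid m,n<0\}$, $\mathcal L_r^+=\mathrm{span}\,\mathcal B_+\oplus\mathbb C$, and $M_r=U(\mathcal L_r)\otimes_{U(\mathcal L_r^+)}\mathbb C\mathbf 1$, where $\mathcal B_+$ acts by $0$ on $\mathbf 1$ and $s\in\mathbb C\subset\mathcal L_r$ acts by the scalar $s$. Define operators on $M_r$: $L_r^{ij}(m)=\frac12\sum_{h\in\mathbb Z}v^{ij}(m-h,h)$ if $i\ne j$ or $m\ne0$, and $L_r^{ii}(0)=\frac12 v^{ii}(0,0)+\sum_{h>0}v^{ii}(-h,h)$ (on each vector only finitely many terms are nonzero). $V_{\mathcal J}$ denotes the span described in the claim. *)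

theory Defs
  imports Complex_Main
begin

text \<open>
  Basis of L_r: generators V i j m n (standing for v^{ij}(m,n), valid iff
  1 <= i,j <= d and (i < j, or i = j and m <= n)) and One (the constant 1).
  U(L_r) is modelled by the free vector space on words (lists) of valid
  generators modulo the two-sided ideal generated by x y - y x - [x,y]_r;
  M_r = U(L_r) tensor_{U(L_r^+)} C 1 is that space modulo additionally
  the left ideal generated by B_+ and by (One - 1).  So a vector of M_r is
  represented by a finitely supported function  gen list => complex,
  and the kernel of the quotient map is the span of Rgens below.
\<close>

datatype gen = V nat nat int int | One

fun valid_gen :: "nat \<Rightarrow> gen \<Rightarrow> bool" where
  "valid_gen d (V i j m n) =
     (1 \<le> i \<and> i \<le> d \<and> 1 \<le> j \<and> j \<le> d \<and> (i < j \<or> (i = j \<and> m \<le> n)))"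
| "valid_gen d One = True"

definition valid_word :: "nat \<Rightarrow> gen list \<Rightarrow> bool" where
  "valid_word d w = list_all (valid_gen d) w"

fun in_Bplus :: "gen \<Rightarrow> bool" where
  "in_Bplus (V i j m n) = (0 \<le> m \<or> 0 \<le> n)"
| "in_Bplus One = False"

definition delta :: "'a \<Rightarrow> 'a \<Rightarrow> complex" where
  "delta a = (\<lambda>b. if b = a then 1 else 0)"

text \<open>The element v^{ij}(m,n) of L (for 1 <= i,j <= d), expressed in the basis B \<union> {1}.\<close>
definition vv :: "nat \<Rightarrow> nat \<Rightarrow> int \<Rightarrow> int \<Rightarrow> gen \<Rightarrow> complex" where
  "vv i j m n =
    (if i < j then delta (V i j m n)
     else if j < i then delta (V j i n m)
     else if m \<le> n then delta (V i i m n)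
     else if m = - n then (\<lambda>g. delta (V i i n m) g + (if g = One then of_int m else 0))
     else delta (V i i n m))"

definition kd :: "nat \<Rightarrow> nat \<Rightarrow> int \<Rightarrow> int \<Rightarrow> complex" where
  "kd i k s c = (if i = k \<and> s = 0 then of_int c else 0)"

text \<open>Commutator in A of basis elements:
  [v^i(a)v^j(b), v^k(c)v^l(e)] = [v^j(b),v^k(c)] v^{il}(a,e) + [v^j(b),v^l(e)] v^{ik}(a,c)
     + [v^i(a),v^k(c)] v^{lj}(e,b) + [v^i(a),v^l(e)] v^{kj}(c,b).\<close>
fun brkA :: "gen \<Rightarrow> gen \<Rightarrow> gen \<Rightarrow> complex" where
  "brkA (V i j a b) (V k l c e) =
     (\<lambda>g. kd j k (b + c) b * vv i l a e g + kd j l (b + e) b * vv i k a c g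
        + kd i k (a + c) a * vv l j e b g + kd i l (a + e) a * vv k j c b g)"
| "brkA _ _ = (\<lambda>g. 0)"

text \<open>The bracket [x,y]_r = pi_1([x,y]) + r pi_2([x,y]).\<close>
definition brk :: "complex \<Rightarrow> gen \<Rightarrow> gen \<Rightarrow> gen \<Rightarrow> complex" where
  "brk r x y = (\<lambda>g. if g = One then r * brkA x y One else brkA x y g)"

definition wd :: "gen list \<Rightarrow> gen list \<Rightarrow> complex" where
  "wd w = (\<lambda>t. if t = w then 1 else 0)"

text \<open>ins u z w: the vector u \<cdot> z \<cdot> w, for z an element of L (given by coordinates).\<close>
definition ins :: "gen list \<Rightarrow> (gen \<Rightarrow> complex) \<Rightarrow> gen list \<Rightarrow> gen list \<Rightarrow> complex" where
  "ins u z w = (\<lambda>t. if length t = length u + length w + 1 \<and> take (length u) t = u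
                        \<and> drop (length u + 1) t = w then z (t ! length u) else 0)"

definition act :: "(gen \<Rightarrow> complex) \<Rightarrow> (gen list \<Rightarrow> complex) \<Rightarrow> gen list \<Rightarrow> complex" where
  "act z f = (\<lambda>t. case t of [] \<Rightarrow> 0 | g # t' \<Rightarrow> z g * f t')"

definition cspan :: "(gen list \<Rightarrow> complex) set \<Rightarrow> (gen list \<Rightarrow> complex) set" where
  "cspan S = {f. \<exists>A c. finite A \<and> A \<subseteq> S \<and> f = (\<lambda>t. \<Sum>a\<in>A. c a * a t)}"

definition Rgens :: "nat \<Rightarrow> complex \<Rightarrow> (gen list \<Rightarrow> complex) set" where
  "Rgens d r =
     {(\<lambda>t. wd (u @ [x, y] @ w) t - wd (u @ [y, x] @ w) t - ins u (brk r x y) w t) | u x y w.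
        valid_word d u \<and> valid_gen d x \<and> valid_gen d y \<and> valid_word d w}
   \<union> {wd (u @ [b]) | u b. valid_word d u \<and> valid_gen d b \<and> in_Bplus b}
   \<union> {(\<lambda>t. wd (u @ [One]) t - wd u t) | u. valid_word d u}"

definition Ker :: "nat \<Rightarrow> complex \<Rightarrow> (gen list \<Rightarrow> complex) set" where
  "Ker d r = cspan (Rgens d r)"

text \<open>The operator L_r^{ij}(m) on (representatives of) vectors of M_r; the sum runs over
  the terms that are nonzero in M_r (finitely many on each vector).\<close>
definition Lop :: "nat \<Rightarrow> complex \<Rightarrow> nat \<Rightarrow> nat \<Rightarrow> int \<Rightarrow> (gen list \<Rightarrow> complex) \<Rightarrow> gen list \<Rightarrow> complex" where
  "Lop d r i j m f =
    (if i \<noteq> j \<or> m \<noteq> 0 then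
       (\<lambda>t. (1/2) * (\<Sum>h\<in>{h. act (vv i j (m - h) h) f \<notin> Ker d r}. act (vv i j (m - h) h) f t))
     else
       (\<lambda>t. (1/2) * act (vv i i 0 0) f t
            + (\<Sum>h\<in>{h. 0 < h \<and> act (vv i i (- h) h) f \<notin> Ker d r}. act (vv i i (- h) h) f t)))"

definition Lvecs :: "nat \<Rightarrow> complex \<Rightarrow> (gen list \<Rightarrow> complex) set" where
  "Lvecs d r = {foldr (\<lambda>(i, j, m) f. Lop d r i j m f) qs (wd []) | qs.
                  \<forall>(i, j, m) \<in> set qs. 1 \<le> i \<and> i \<le> d \<and> 1 \<le> j \<and> j \<le> d}"

end

theory Submission
  imports Defs "HOL-Library.Function_Algebras"
begin

text \<open>
  Straightening a word (moving each generator to the right, where \<open>B\<^sub>+\<close> annihilates and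
  brackets with negative generators stay negative) shows that every vector of \<open>M\<^sub>r\<close> is a
  combination of words in negative generators, so it suffices to show by induction on \<open>n\<close>
  that every negative word of length \<open>n\<close> lies in \<open>V\<^sub>J\<close>. Call \<open>z \<in> L\<^sub>r\<close> an extender if
  \<open>z X \<in> V\<^sub>J\<close> for all negative words \<open>X\<close> of length \<open>n\<close>; extenders form a subspace.
  Modulo the kernel, \<open>L\<^sub>r\<^sup>i\<^sup>j(m)\<close> with \<open>m < 0\<close> acts on \<open>X\<close> as \<open>c\<^sup>i\<^sup>j(m)\<close>, half the sum of
  \<open>v\<^sup>i\<^sup>j(m - h, h)\<close> over \<open>m < h < 0\<close>, plus terms that straighten to negative words of length
  \<open>n\<close>, so \<open>c\<^sup>i\<^sup>j(m)\<close> is an extender; and if \<open>y\<close> is an extender then so is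
  \<open>[L\<^sub>r\<^sup>i\<^sup>j(m), y]\<close> for \<open>m \<in> {-1, 0}\<close>. Starting from \<open>c\<^sup>k\<^sup>l(-2) = 1/2 v\<^sup>k\<^sup>l(-1, -1)\<close>, bracketing
  with \<open>L\<^sub>r\<^sup>k\<^sup>k(-1)\<close> lowers modes one at a time and gives every \<open>v\<^sup>k\<^sup>l(a, b)\<close> with \<open>k \<noteq> l\<close>;
  bracketing these with \<open>L\<^sub>r\<^sup>k\<^sup>l(0)\<close> (this needs \<open>d \<ge> 2\<close>) gives the diagonal \<open>v\<^sup>k\<^sup>k(a, b)\<close>
  with \<open>a \<noteq> b\<close>, and then \<open>c\<^sup>k\<^sup>k(2a)\<close> gives \<open>v\<^sup>k\<^sup>k(a, a)\<close>. So every negative generator is an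
  extender, and the negative words of length \<open>n + 1\<close> lie in \<open>V\<^sub>J\<close>.
\<close>

definition fscale :: "complex \<Rightarrow> ('a \<Rightarrow> complex) \<Rightarrow> 'a \<Rightarrow> complex" where
  "fscale c f = (\<lambda>x. c * f x)"

interpretation cfun: module "fscale :: complex \<Rightarrow> ('a \<Rightarrow> complex) \<Rightarrow> 'a \<Rightarrow> complex"
  by unfold_locales (auto simp: fscale_def fun_eq_iff algebra_simps)

lemma sum_fun_apply: "(\<Sum>a\<in>A. F a) t = (\<Sum>a\<in>A. F a t)"
  by (induction A rule: infinite_finite_induct) auto

lemma cspan_eq_span: "cspan S = cfun.span S"
  unfolding cspan_def cfun.span_explicit
  by (auto simp: fscale_def sum_fun_apply fun_eq_iff)

section \<open>Words and left multiplication\<close>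

lemma valid_word_simps [simp]:
  "valid_word d []"
  "valid_word d (g # w) \<longleftrightarrow> valid_gen d g \<and> valid_word d w"
  "valid_word d (u @ w) \<longleftrightarrow> valid_word d u \<and> valid_word d w"
  by (simp_all add: valid_word_def)

definition lmul :: "gen \<Rightarrow> (gen list \<Rightarrow> complex) \<Rightarrow> gen list \<Rightarrow> complex" where
  "lmul g f = act (delta g) f"

lemma lmul_wd [simp]: "lmul g (wd w) = wd (g # w)"
  by (auto simp: lmul_def act_def wd_def delta_def fun_eq_iff split: list.splits)

lemma lmul_ins [simp]: "lmul g (ins u z w) = ins (g # u) z w"
  by (auto simp: lmul_def act_def ins_def delta_def fun_eq_iff split: list.splits)

lemma lmul_add [simp]: "lmul g (f + h) = lmul g f + lmul g h"
  and lmul_diff [simp]: "lmul g (f - h) = lmul g f - lmul g h"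
  and lmul_fscale [simp]: "lmul g (fscale c f) = fscale c (lmul g f)"
  and lmul_zero [simp]: "lmul g 0 = 0"
  by (auto simp: lmul_def act_def fscale_def fun_eq_iff algebra_simps split: list.splits)

lemma module_hom_lmul: "module_hom fscale fscale (lmul g)"
  by (intro module_hom.intro cfun.module_axioms module_hom_axioms.intro) simp_all

lemma lmul_span_subset:
  assumes "f \<in> cfun.span S" "\<And>y. y \<in> S \<Longrightarrow> lmul g y \<in> T" "cfun.subspace T"
  shows "lmul g f \<in> T"
proof -
  have "cfun.span S \<subseteq> lmul g -` T"
    using assms(2) by (intro cfun.span_minimal module_hom.subspace_vimage[OF module_hom_lmul assms(3)]) auto
  with assms(1) show ?thesis by blast
qed

lemma lmul_sum: "lmul g (\<Sum>h\<in>A. f h) = (\<Sum>h\<in>A. lmul g (f h))"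
  by (simp add: lmul_def act_def fun_eq_iff sum_fun_apply sum_distrib_left split: list.splits)

lemma act_delta: "act (delta g) f = lmul g f"
  by (simp add: lmul_def)

lemma act_wd: "act z (wd w) = ins [] z w"
  by (auto simp: act_def ins_def wd_def fun_eq_iff split: list.splits)

lemma ins_delta [simp]: "ins u (delta g) w = wd (u @ g # w)"
  by (auto simp: ins_def wd_def delta_def fun_eq_iff)
    (metis append_take_drop_id Cons_nth_drop_Suc add_Suc_right length_append_singleton
      less_add_Suc1 length_append list.size(4) add.commute)

lemma act_add: "act (z1 + z2) f = act z1 f + act z2 f"
  and act_fscale: "act (fscale c z) f = fscale c (act z f)"
  and act_sum: "act (\<Sum>h\<in>A. Z h) f = (\<Sum>h\<in>A. act (Z h) f)"
  and act_zero: "act 0 f = 0"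
  by (auto simp: act_def fscale_def fun_eq_iff sum_fun_apply sum_distrib_right sum_distrib_left
      algebra_simps split: list.splits)

lemma ins_add: "ins u (z1 + z2) w = ins u z1 w + ins u z2 w"
  and ins_fscale: "ins u (fscale c z) w = fscale c (ins u z w)"
  and ins_zero: "ins u 0 w = 0"
  by (auto simp: ins_def fscale_def fun_eq_iff)

section \<open>The kernel\<close>

lemma Ker_eq_span: "Ker d r = cfun.span (Rgens d r)"
  unfolding Ker_def cspan_eq_span ..

lemma Ker_subspace: "cfun.subspace (Ker d r)"
  unfolding Ker_eq_span by simp

lemma Rgens_commI:
  "valid_word d u \<Longrightarrow> valid_gen d x \<Longrightarrow> valid_gen d y \<Longrightarrow> valid_word d w \<Longrightarrow>
    wd (u @ x # y # w) - wd (u @ y # x # w) - ins u (brk r x y) w \<in> Rgens d r"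
  unfolding Rgens_def fun_diff_def by (intro UnI1 CollectI) force

lemma Rgens_BplusI:
  "valid_word d u \<Longrightarrow> valid_gen d b \<Longrightarrow> in_Bplus b \<Longrightarrow> wd (u @ [b]) \<in> Rgens d r"
  unfolding Rgens_def by blast

lemma Rgens_OneI: "valid_word d u \<Longrightarrow> wd (u @ [One]) - wd u \<in> Rgens d r"
  unfolding Rgens_def fun_diff_def by blast

lemma Rgens_cases [consumes 1, case_names comm Bplus One]:
  assumes "f \<in> Rgens d r"
  obtains (comm) u x y w where "f = wd (u @ x # y # w) - wd (u @ y # x # w) - ins u (brk r x y) w"
      "valid_word d u" "valid_gen d x" "valid_gen d y" "valid_word d w"
    | (Bplus) u b where "f = wd (u @ [b])" "valid_word d u" "valid_gen d b" "in_Bplus b"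
    | (One) u where "f = wd (u @ [One]) - wd u" "valid_word d u"
  using assms unfolding Rgens_def fun_diff_def by fastforce

lemma lmul_Rgens:
  assumes g: "valid_gen d g" and f: "f \<in> Rgens d r"
  shows "lmul g f \<in> Rgens d r"
  using f
proof (cases rule: Rgens_cases)
  case (comm u x y w)
  then show ?thesis using g Rgens_commI[of d "g # u" x y w r] by simp
next
  case (Bplus u b)
  then show ?thesis using g Rgens_BplusI[of d "g # u" b r] by simp
next
  case (One u)
  then show ?thesis using g Rgens_OneI[of d "g # u" r] by simp
qed

lemma lmul_Ker: "valid_gen d g \<Longrightarrow> f \<in> Ker d r \<Longrightarrow> lmul g f \<in> Ker d r"
  unfolding Ker_eq_span
  by (erule lmul_span_subset) (auto intro: cfun.span_base lmul_Rgens)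

lemma commutator_in_Ker:
  "valid_word d u \<Longrightarrow> valid_gen d x \<Longrightarrow> valid_gen d y \<Longrightarrow> valid_word d w \<Longrightarrow>
    wd (u @ x # y # w) - wd (u @ y # x # w) - ins u (brk r x y) w \<in> Ker d r"
  unfolding Ker_eq_span by (intro cfun.span_base Rgens_commI)

lemma Bplus_word_in_Ker:
  "valid_word d u \<Longrightarrow> valid_gen d b \<Longrightarrow> in_Bplus b \<Longrightarrow> wd (u @ [b]) \<in> Ker d r"
  unfolding Ker_eq_span by (intro cfun.span_base Rgens_BplusI)

lemma One_word_in_Ker: "valid_word d u \<Longrightarrow> wd (u @ [One]) - wd u \<in> Ker d r"
  unfolding Ker_eq_span by (intro cfun.span_base Rgens_OneI)

section \<open>Basis generators and their brackets\<close>

definition basis_gen :: "nat \<Rightarrow> nat \<Rightarrow> int \<Rightarrow> int \<Rightarrow> gen" where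
  "basis_gen i j p q =
     (if i < j then V i j p q else if j < i then V j i q p else if p \<le> q then V i i p q else V i i q p)"

lemma basis_gen_swap: "basis_gen i j p q = basis_gen j i q p"
  by (auto simp: basis_gen_def)

lemma valid_basis_gen: "i \<in> {1..d} \<Longrightarrow> j \<in> {1..d} \<Longrightarrow> valid_gen d (basis_gen i j p q)"
  by (auto simp: basis_gen_def)

lemma vv_eq_basis_gen:
  "vv i j p q = delta (basis_gen i j p q)
     + fscale (if i = j \<and> q < p \<and> p = - q then of_int p else 0) (delta One)"
  by (auto simp: vv_def basis_gen_def delta_def fscale_def fun_eq_iff)

lemma vv_basis_gen: "\<not> (i = j \<and> q < p \<and> p = - q) \<Longrightarrow> vv i j p q = delta (basis_gen i j p q)"
  by (auto simp: vv_def basis_gen_def delta_def fun_eq_iff)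

lemma act_vv_basis_gen: "\<not> (i = j \<and> q < p \<and> p = - q) \<Longrightarrow> act (vv i j p q) f = lmul (basis_gen i j p q) f"
  by (simp add: vv_basis_gen act_delta)

fun negative :: "gen \<Rightarrow> bool" where
  "negative (V i j a b) \<longleftrightarrow> a < 0 \<and> b < 0"
| "negative One \<longleftrightarrow> False"

fun Bplus_nonpos :: "gen \<Rightarrow> bool" where
  "Bplus_nonpos (V i j a b) \<longleftrightarrow> (0 \<le> a \<or> 0 \<le> b) \<and> a + b \<le> 0"
| "Bplus_nonpos One \<longleftrightarrow> False"

lemma negative_basis_gen: "p < 0 \<Longrightarrow> q < 0 \<Longrightarrow> negative (basis_gen i j p q)"
  by (auto simp: basis_gen_def)

lemma in_Bplus_basis_gen: "0 \<le> p \<or> 0 \<le> q \<Longrightarrow> in_Bplus (basis_gen i j p q)"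
  by (auto simp: basis_gen_def)

lemma Bplus_nonpos_basis_gen: "m \<le> 0 \<Longrightarrow> \<not> (m < h \<and> h < 0) \<Longrightarrow> Bplus_nonpos (basis_gen i j (m - h) h)"
  by (auto simp: basis_gen_def)

definition gen_span :: "(gen \<Rightarrow> bool) \<Rightarrow> (gen \<Rightarrow> complex) set" where
  "gen_span P = cfun.span {delta g | g. P g}"

lemma delta_in_gen_span: "P g \<Longrightarrow> delta g \<in> gen_span P"
  unfolding gen_span_def by (intro cfun.span_base) blast

lemma gen_span_vanishes_at_One:
  assumes "z \<in> gen_span P" "\<not> P One"
  shows "z One = 0"
  using assms(1) unfolding gen_span_def
proof (induction rule: cfun.span_induct_alt)
  case (step c x y)
  then obtain g where "x = delta g" "P g" by auto
  with assms(2) step.IH show ?case by (auto simp: fscale_def delta_def)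
qed simp

lemma scaled_vv_in_gen_span:
  assumes "i \<in> {1..d}" "l \<in> {1..d}"
  shows "(\<lambda>g. \<kappa> * vv i l a e g) \<in> gen_span (valid_gen d)"
proof -
  have "(\<lambda>g. \<kappa> * vv i l a e g) = fscale \<kappa> (delta (basis_gen i l a e))
      + fscale (\<kappa> * (if i = l \<and> e < a \<and> a = - e then of_int a else 0)) (delta One)"
    by (simp add: vv_eq_basis_gen fscale_def fun_eq_iff algebra_simps)
  also have "\<dots> \<in> gen_span (valid_gen d)"
    using assms unfolding gen_span_def
    by (intro cfun.span_add cfun.span_scale delta_in_gen_span[unfolded gen_span_def] valid_basis_gen) auto
  finally show ?thesis .
qed

lemma scaled_vv_in_negative_span:
  assumes "i \<in> {1..d}" "l \<in> {1..d}" "\<kappa> \<noteq> 0 \<Longrightarrow> a < 0 \<and> e < 0"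
  shows "(\<lambda>g. \<kappa> * vv i l a e g) \<in> gen_span (\<lambda>g. valid_gen d g \<and> negative g)"
proof (cases "\<kappa> = 0")
  case True
  then show ?thesis using cfun.span_zero by (simp add: gen_span_def zero_fun_def)
next
  case False
  with assms have "a < 0" "e < 0" by auto
  then have "(\<lambda>g. \<kappa> * vv i l a e g) = fscale \<kappa> (delta (basis_gen i l a e))"
    by (simp add: vv_basis_gen fscale_def)
  also have "\<dots> \<in> gen_span (\<lambda>g. valid_gen d g \<and> negative g)"
    using assms \<open>a < 0\<close> \<open>e < 0\<close> unfolding gen_span_def
    by (intro cfun.span_scale delta_in_gen_span[unfolded gen_span_def])
      (auto intro: valid_basis_gen negative_basis_gen)
  finally show ?thesis .
qed

lemma brkA_V_eq_sum:
  "brkA (V i j a b) (V k l c e) =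
     (\<lambda>g. kd j k (b + c) b * vv i l a e g) + (\<lambda>g. kd j l (b + e) b * vv i k a c g)
     + (\<lambda>g. kd i k (a + c) a * vv l j e b g) + (\<lambda>g. kd i l (a + e) a * vv k j c b g)"
  by (simp add: fun_eq_iff)

lemma brkA_in_gen_span:
  assumes "valid_gen d x" "valid_gen d y"
  shows "brkA x y \<in> gen_span (valid_gen d)"
proof (cases x; cases y)
  fix i j a b k l c e assume xy: "x = V i j a b" "y = V k l c e"
  have "brkA (V i j a b) (V k l c e) \<in> gen_span (valid_gen d)"
    unfolding brkA_V_eq_sum gen_span_def using assms xy
    by (intro cfun.span_add scaled_vv_in_gen_span[unfolded gen_span_def]) auto
  then show ?thesis using xy by simp
qed (simp_all add: gen_span_def cfun.span_zero[unfolded zero_fun_def])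

lemma brk_eq: "brk r x y = brkA x y + fscale ((r - 1) * brkA x y One) (delta One)"
  by (auto simp: brk_def fscale_def delta_def fun_eq_iff algebra_simps)

lemma brk_in_gen_span:
  assumes "valid_gen d x" "valid_gen d y"
  shows "brk r x y \<in> gen_span (valid_gen d)"
  unfolding brk_eq using brkA_in_gen_span[OF assms] unfolding gen_span_def
  by (intro cfun.span_add[OF _ cfun.span_scale[OF cfun.span_base]]) auto

lemma kd_nonzero: "kd i k s c \<noteq> 0 \<Longrightarrow> s = 0 \<and> c \<noteq> 0"
  by (auto simp: kd_def split: if_splits)

lemma brk_Bplus_nonpos_negative:
  assumes "valid_gen d x" "Bplus_nonpos x" "valid_gen d y" "negative y"
  shows "brk r x y \<in> gen_span (\<lambda>g. valid_gen d g \<and> negative g)"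
proof -
  have A: "brkA x y \<in> gen_span (\<lambda>g. valid_gen d g \<and> negative g)"
  proof (cases x; cases y)
    fix i j a b k l c e assume xy: "x = V i j a b" "y = V k l c e"
    have "brkA (V i j a b) (V k l c e) \<in> gen_span (\<lambda>g. valid_gen d g \<and> negative g)"
      unfolding brkA_V_eq_sum gen_span_def using assms xy
      by (intro cfun.span_add scaled_vv_in_negative_span[unfolded gen_span_def])
        (auto dest!: kd_nonzero)
    then show ?thesis using xy by simp
  qed (use assms in auto)
  then have "brkA x y One = 0" by (rule gen_span_vanishes_at_One) simp
  then have "brk r x y = brkA x y" by (simp add: brk_def fun_eq_iff)
  with A show ?thesis by simp
qed

lemma brk_One [simp]: "brk r x One = 0"
  by (simp add: brk_def fun_eq_iff)

lemma basis_gen_cases: "\<exists>i' j'. basis_gen i j p q = V i' j' p q \<or> basis_gen i j p q = V i' j' q p"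
  by (auto simp: basis_gen_def)

lemma brk_basis_gen_vanishes:
  assumes "h \<noteq> - c" "h \<noteq> - e" "h \<noteq> m + c" "h \<noteq> m + e"
  shows "brk r (basis_gen i j (m - h) h) (V k l c e) = 0"
proof -
  have "h + c \<noteq> 0" "h + e \<noteq> 0" "m - h + c \<noteq> 0" "m - h + e \<noteq> 0"
    using assms by auto
  then show ?thesis
    using basis_gen_cases[of i j "m - h" h] by (auto simp: brk_def kd_def fun_eq_iff)
qed

lemma brk_raise:
  assumes "k \<noteq> l" "a < 0" "b < 0"
  shows "brk r (basis_gen k k (-1 - h) h) (basis_gen k l a b) =
    (if h = -a \<or> h = a - 1 then fscale (-a) (delta (basis_gen k l (a - 1) b)) else 0)"
  using assms by (auto simp: brk_def basis_gen_def kd_def vv_def delta_def fscale_def fun_eq_iff)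

lemma brk_swap:
  assumes "k \<noteq> l" "a < 0" "b < 0"
  shows "brk r (basis_gen k l (- h) h) (basis_gen k l a b) =
    (if h = a then fscale (-a) (delta (basis_gen l l a b)) else 0)
    + (if h = -b then fscale (-b) (delta (basis_gen k k a b)) else 0)"
  using assms by (auto simp: brk_def basis_gen_def kd_def vv_def delta_def fscale_def fun_eq_iff)

section \<open>Straightening words\<close>

lemma ins_in_span_words:
  assumes "z \<in> gen_span P"
  shows "ins u z w \<in> cfun.span {wd (u @ g # w) | g. P g}"
  using assms unfolding gen_span_def
proof (induction rule: cfun.span_induct_alt)
  case base
  show ?case by (metis ins_zero cfun.span_zero)
next
  case (step c x y)
  then obtain g where g: "x = delta g" "P g" by blast
  have "wd (u @ g # w) \<in> {wd (u @ g # w) | g. P g}" using g(2) by blast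
  then show ?case unfolding ins_add ins_fscale g(1) ins_delta
    by (intro cfun.span_add[OF cfun.span_scale[OF cfun.span_base]] step.IH)
qed

definition neg_word :: "nat \<Rightarrow> gen list \<Rightarrow> bool" where
  "neg_word d X \<longleftrightarrow> valid_word d X \<and> list_all negative X"

lemma neg_word_simps [simp]:
  "neg_word d []"
  "neg_word d (x # X) \<longleftrightarrow> valid_gen d x \<and> negative x \<and> neg_word d X"
  by (auto simp: neg_word_def)

definition negspan :: "nat \<Rightarrow> complex \<Rightarrow> nat set \<Rightarrow> (gen list \<Rightarrow> complex) set" where
  "negspan d r N = cfun.span ({wd X | X. neg_word d X \<and> length X \<in> N} \<union> Ker d r)"

lemma negspan_subspace: "cfun.subspace (negspan d r N)"
  unfolding negspan_def by simp

lemma Ker_subset_negspan: "f \<in> Ker d r \<Longrightarrow> f \<in> negspan d r N"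
  unfolding negspan_def by (simp add: cfun.span_base)

lemma neg_word_in_negspan: "neg_word d X \<Longrightarrow> length X \<in> N \<Longrightarrow> wd X \<in> negspan d r N"
  unfolding negspan_def by (rule cfun.span_base) blast

lemma negspan_mono: "N \<subseteq> N' \<Longrightarrow> negspan d r N \<subseteq> negspan d r N'"
  unfolding negspan_def by (rule cfun.span_mono) blast

lemma lmul_negative_negspan:
  assumes "valid_gen d x" "negative x" "f \<in> negspan d r N"
  shows "lmul x f \<in> negspan d r (Suc ` N)"
  using assms(3)[unfolded negspan_def]
proof (rule lmul_span_subset[OF _ _ negspan_subspace])
  fix y assume "y \<in> {wd X | X. neg_word d X \<and> length X \<in> N} \<union> Ker d r"
  then consider X where "y = wd X" "neg_word d X" "length X \<in> N" | "y \<in> Ker d r"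
    by blast
  then show "lmul x y \<in> negspan d r (Suc ` N)"
  proof cases
    case 1
    then show ?thesis using assms(1,2) by (auto intro: neg_word_in_negspan)
  qed (use assms(1) in \<open>auto intro: Ker_subset_negspan lmul_Ker\<close>)
qed

lemma span_words_subset_negspan:
  assumes "\<And>g. P g \<Longrightarrow> wd (g # X) \<in> negspan d r N"
  shows "cfun.span {wd ([] @ g # X) | g. P g} \<subseteq> negspan d r N"
  using assms by (intro cfun.span_minimal[OF _ negspan_subspace]) auto

text \<open>Splitting off a commutator relation moves \<open>g\<close> past \<open>x\<close> at the cost of the bracket term.\<close>
lemma wd_Cons_Cons_eq:
  "wd (g # x # X) = (wd ([] @ g # x # X) - wd ([] @ x # g # X) - ins [] (brk r g x) X)
     + lmul x (wd (g # X)) + ins [] (brk r g x) X"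
  by simp

lemma gen_neg_word_in_negspan:
  assumes "valid_gen d g" "neg_word d X"
  shows "wd (g # X) \<in> negspan d r UNIV"
  using assms
proof (induction X arbitrary: g)
  case Nil
  consider "g = One" | "in_Bplus g" | "negative g"
    by (cases g) (simp_all, linarith)
  then show ?case
  proof cases
    case 1
    have "wd [One] = (wd ([] @ [One]) - wd []) + wd []" by simp
    also have "\<dots> \<in> negspan d r UNIV"
      by (intro cfun.subspace_add[OF negspan_subspace] Ker_subset_negspan One_word_in_Ker
          neg_word_in_negspan) auto
    finally show ?thesis using 1 by simp
  next
    case 2
    then show ?thesis
      using Bplus_word_in_Ker[of d "[]" g r] Nil Ker_subset_negspan by simp
  next
    case 3
    then show ?thesis using Nil by (intro neg_word_in_negspan) auto
  qed
next
  case (Cons x X)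
  then have x: "valid_gen d x" "negative x" and X: "neg_word d X" by auto
  have "lmul x (wd (g # X)) \<in> negspan d r UNIV"
    using lmul_negative_negspan[OF x Cons.IH[OF Cons.prems(1) X]] negspan_mono by blast
  moreover have "ins [] (brk r g x) X \<in> negspan d r UNIV"
    using ins_in_span_words[OF brk_in_gen_span] span_words_subset_negspan Cons.IH[OF _ X]
      Cons.prems x by blast
  moreover have "wd ([] @ g # x # X) - wd ([] @ x # g # X) - ins [] (brk r g x) X \<in> negspan d r UNIV"
    using Cons.prems x X by (intro Ker_subset_negspan commutator_in_Ker) (auto simp: neg_word_def)
  ultimately show ?case
    by (subst wd_Cons_Cons_eq) (intro cfun.subspace_add[OF negspan_subspace])
qed

lemma lmul_negspan:
  assumes "valid_gen d g" "f \<in> negspan d r UNIV"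
  shows "lmul g f \<in> negspan d r UNIV"
  using assms(2)[unfolded negspan_def]
proof (rule lmul_span_subset[OF _ _ negspan_subspace])
  fix y assume "y \<in> {wd X | X. neg_word d X \<and> length X \<in> UNIV} \<union> Ker d r"
  then consider X where "y = wd X" "neg_word d X" | "y \<in> Ker d r"
    by blast
  then show "lmul g y \<in> negspan d r UNIV"
  proof cases
    case 1
    then show ?thesis using gen_neg_word_in_negspan[OF assms(1)] by simp
  next
    case 2
    then show ?thesis using lmul_Ker[OF assms(1)] Ker_subset_negspan by blast
  qed
qed

lemma word_in_negspan: "valid_word d w \<Longrightarrow> wd w \<in> negspan d r UNIV"
proof (induction w)
  case Nil
  show ?case by (rule neg_word_in_negspan) auto
next
  case (Cons g w)
  then show ?case using lmul_negspan[of d g "wd w" r] by simp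
qed

lemma Bplus_nonpos_word_in_negspan:
  assumes "valid_gen d g" "Bplus_nonpos g" "neg_word d X"
  shows "wd (g # X) \<in> negspan d r {length X}"
  using assms
proof (induction X)
  case Nil
  have "in_Bplus g" using Nil.prems(2) by (cases g) auto
  then show ?case using Bplus_word_in_Ker[of d "[]" g r] Nil.prems(1) Ker_subset_negspan by simp
next
  case (Cons x X)
  then have x: "valid_gen d x" "negative x" and X: "neg_word d X" by auto
  have "lmul x (wd (g # X)) \<in> negspan d r {length (x # X)}"
    using lmul_negative_negspan[OF x Cons.IH[OF Cons.prems(1,2) X]] by simp
  moreover have "ins [] (brk r g x) X \<in> negspan d r {length (x # X)}"
  proof -
    have "ins [] (brk r g x) X \<in> cfun.span {wd ([] @ g' # X) | g'. valid_gen d g' \<and> negative g'}"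
      by (rule ins_in_span_words[OF brk_Bplus_nonpos_negative[OF Cons.prems(1,2) x]])
    moreover have "cfun.span {wd ([] @ g' # X) | g'. valid_gen d g' \<and> negative g'}
        \<subseteq> negspan d r {length (x # X)}"
      using X by (intro span_words_subset_negspan neg_word_in_negspan) auto
    ultimately show ?thesis by blast
  qed
  moreover have "wd ([] @ g # x # X) - wd ([] @ x # g # X) - ins [] (brk r g x) X
      \<in> negspan d r {length (x # X)}"
    using Cons.prems x X by (intro Ker_subset_negspan commutator_in_Ker) (auto simp: neg_word_def)
  ultimately show ?case
    by (subst wd_Cons_Cons_eq) (intro cfun.subspace_add[OF negspan_subspace])
qed

section \<open>The operators \<open>L\<^sub>r\<^sup>i\<^sup>j(m)\<close> modulo the kernel\<close>

definition word_span :: "nat \<Rightarrow> (gen list \<Rightarrow> complex) set" where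
  "word_span d = cfun.span {wd w | w. valid_word d w}"

lemma word_span_subspace: "cfun.subspace (word_span d)"
  unfolding word_span_def by simp

lemma wd_in_word_span: "valid_word d w \<Longrightarrow> wd w \<in> word_span d"
  unfolding word_span_def by (rule cfun.span_base) blast

lemma lmul_word_span: "valid_gen d g \<Longrightarrow> f \<in> word_span d \<Longrightarrow> lmul g f \<in> word_span d"
  unfolding word_span_def
  by (erule lmul_span_subset[OF _ _ cfun.subspace_span])
    (auto intro!: wd_in_word_span[unfolded word_span_def])

lemma Ker_subset_word_span: "Ker d r \<subseteq> word_span d"
  unfolding Ker_eq_span
proof (rule cfun.span_minimal[OF _ word_span_subspace], rule subsetI)
  fix f assume "f \<in> Rgens d r"
  then show "f \<in> word_span d"
  proof (cases rule: Rgens_cases)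
    case (comm u x y w)
    have "cfun.span {wd (u @ g # w) | g. valid_gen d g} \<subseteq> word_span d"
      using comm by (intro cfun.span_minimal[OF _ word_span_subspace]) (auto intro: wd_in_word_span)
    then have "ins u (brk r x y) w \<in> word_span d"
      using ins_in_span_words[OF brk_in_gen_span[OF comm(3,4)]] by blast
    with comm show ?thesis
      by (auto intro!: cfun.subspace_diff[OF word_span_subspace] wd_in_word_span)
  qed (auto intro!: cfun.subspace_diff[OF word_span_subspace] wd_in_word_span)
qed

lemma act_vv_eq:
  "act (vv i j p q) f = lmul (basis_gen i j p q) f
     + fscale (if i = j \<and> q < p \<and> p = - q then of_int p else 0) (lmul One f)"
  unfolding vv_eq_basis_gen act_add act_fscale act_delta ..

lemma act_vv_word_span:
  "i \<in> {1..d} \<Longrightarrow> j \<in> {1..d} \<Longrightarrow> f \<in> word_span d \<Longrightarrow> act (vv i j p q) f \<in> word_span d"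
  unfolding act_vv_eq
  by (intro cfun.subspace_add[OF word_span_subspace] cfun.subspace_scale[OF word_span_subspace]
      lmul_word_span valid_basis_gen) auto

lemma Lop_word_span:
  assumes "i \<in> {1..d}" "j \<in> {1..d}" "f \<in> word_span d"
  shows "Lop d r i j m f \<in> word_span d"
proof (cases "i \<noteq> j \<or> m \<noteq> 0")
  case True
  let ?S = "{h. act (vv i j (m - h) h) f \<notin> Ker d r}"
  have "Lop d r i j m f = fscale (1/2) (\<Sum>h\<in>?S. act (vv i j (m - h) h) f)"
    using True by (simp add: Lop_def fscale_def sum_fun_apply fun_eq_iff)
  also have "\<dots> \<in> word_span d"
    using assms by (intro cfun.subspace_scale[OF word_span_subspace] cfun.subspace_sum[OF word_span_subspace]
        act_vv_word_span)
  finally show ?thesis .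
next
  case False
  let ?S = "{h. 0 < h \<and> act (vv i i (- h) h) f \<notin> Ker d r}"
  have "Lop d r i j m f = fscale (1/2) (act (vv i i 0 0) f) + (\<Sum>h\<in>?S. act (vv i i (- h) h) f)"
    using False by (simp add: Lop_def fscale_def sum_fun_apply fun_eq_iff)
  also have "\<dots> \<in> word_span d"
    using assms False by (intro cfun.subspace_add[OF word_span_subspace] cfun.subspace_scale[OF word_span_subspace]
        cfun.subspace_sum[OF word_span_subspace] act_vv_word_span) auto
  finally show ?thesis .
qed

lemma Lop_Lvecs:
  assumes "x \<in> Lvecs d r" "i \<in> {1..d}" "j \<in> {1..d}"
  shows "Lop d r i j m x \<in> Lvecs d r"
proof -
  obtain qs where "x = foldr (\<lambda>(i, j, m) f. Lop d r i j m f) qs (wd [])"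
    "\<forall>(i, j, m) \<in> set qs. 1 \<le> i \<and> i \<le> d \<and> 1 \<le> j \<and> j \<le> d"
    using assms(1) unfolding Lvecs_def by blast
  then show ?thesis
    unfolding Lvecs_def using assms(2,3) by (intro CollectI exI[of _ "(i, j, m) # qs"]) auto
qed

lemma Lvecs_subset_word_span: "Lvecs d r \<subseteq> word_span d"
proof
  fix x assume "x \<in> Lvecs d r"
  then obtain qs where x: "x = foldr (\<lambda>(i, j, m) f. Lop d r i j m f) qs (wd [])"
    and qs: "\<forall>(i, j, m) \<in> set qs. 1 \<le> i \<and> i \<le> d \<and> 1 \<le> j \<and> j \<le> d"
    unfolding Lvecs_def by blast
  from qs have "foldr (\<lambda>(i, j, m) f. Lop d r i j m f) qs (wd []) \<in> word_span d"
    by (induction qs) (auto intro: wd_in_word_span Lop_word_span)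
  with x show "x \<in> word_span d" by simp
qed

lemma Bplus_commuting_word_in_Ker:
  assumes "valid_gen d g" "in_Bplus g" "valid_word d X" "\<forall>x\<in>set X. brk r g x = 0"
  shows "wd (g # X) \<in> Ker d r"
  using assms(3,4)
proof (induction X)
  case Nil
  then show ?case using Bplus_word_in_Ker[of d "[]" g r] assms(1,2) by simp
next
  case (Cons x X)
  have "ins [] (brk r g x) X = 0"
    using Cons.prems(2) by (simp add: ins_def fun_eq_iff)
  then have "wd (g # x # X) = (wd ([] @ g # x # X) - wd ([] @ x # g # X) - ins [] (brk r g x) X)
      + lmul x (wd (g # X))"
    by simp
  also have "\<dots> \<in> Ker d r"
    using Cons.prems assms(1)
    by (intro cfun.subspace_add[OF Ker_subspace] commutator_in_Ker lmul_Ker Cons.IH) auto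
  finally show ?case .
qed

fun modes :: "gen \<Rightarrow> int set" where
  "modes (V i j a b) = {a, b}"
| "modes One = {}"

text \<open>Outside this window \<open>v\<^sup>i\<^sup>j(m - h, h)\<close> lies in \<open>B\<^sub>+\<close> and commutes with every generator of \<open>X\<close>.\<close>
definition mode_window :: "int \<Rightarrow> gen list \<Rightarrow> int set" where
  "mode_window m X = {m<..<0} \<union> (\<Union>x\<in>set X. \<Union>a\<in>modes x. {- a, m + a})"

lemma finite_mode_window: "finite (mode_window m X)"
proof -
  have "finite (modes x)" for x by (cases x) auto
  then show ?thesis by (simp add: mode_window_def)
qed

lemma lmul_outside_mode_window_in_Ker:
  assumes "valid_word d X" "i \<in> {1..d}" "j \<in> {1..d}" "h \<notin> mode_window m X"
  shows "lmul (basis_gen i j (m - h) h) (wd X) \<in> Ker d r"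
proof -
  have "brk r (basis_gen i j (m - h) h) x = 0" if "x \<in> set X" for x
  proof (cases x)
    case (V k l c e)
    with that assms(4) show ?thesis by (auto simp: mode_window_def intro!: brk_basis_gen_vanishes)
  qed simp
  moreover have "in_Bplus (basis_gen i j (m - h) h)"
    using assms(4) by (intro in_Bplus_basis_gen) (auto simp: mode_window_def)
  ultimately show ?thesis
    using assms(1-3) Bplus_commuting_word_in_Ker[OF valid_basis_gen] by simp
qed

lemma finite_support:
  assumes "f \<in> word_span d" "i \<in> {1..d}" "j \<in> {1..d}"
  shows "\<exists>H. finite H \<and> (\<forall>h. h \<notin> H \<longrightarrow> lmul (basis_gen i j (m - h) h) f \<in> Ker d r)"
  using assms(1) unfolding word_span_def
proof (induction rule: cfun.span_induct_alt)
  case base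
  show ?case
    using cfun.subspace_0[OF Ker_subspace]
    by (intro exI[of _ "{}"]) (simp add: zero_fun_def[symmetric])
next
  case (step c x y)
  then obtain X where X: "x = wd X" "valid_word d X" by blast
  from step.IH obtain H where H: "finite H" "\<forall>h. h \<notin> H \<longrightarrow> lmul (basis_gen i j (m - h) h) y \<in> Ker d r"
    by blast
  have "lmul (basis_gen i j (m - h) h) (fscale c x + y) \<in> Ker d r" if "h \<notin> H \<union> mode_window m X" for h
  proof -
    have "lmul (basis_gen i j (m - h) h) x \<in> Ker d r"
      using that X lmul_outside_mode_window_in_Ker[OF X(2) assms(2,3)] by simp
    moreover have "lmul (basis_gen i j (m - h) h) y \<in> Ker d r"
      using that H(2) by simp
    ultimately show ?thesis
      unfolding lmul_add lmul_fscale
      by (rule cfun.subspace_add[OF Ker_subspace cfun.subspace_scale[OF Ker_subspace]])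
  qed
  moreover have "finite (H \<union> mode_window m X)"
    using H(1) finite_mode_window by blast
  ultimately show ?case by blast
qed

definition Lsum :: "nat \<Rightarrow> nat \<Rightarrow> int \<Rightarrow> int set \<Rightarrow> (gen list \<Rightarrow> complex) \<Rightarrow> gen list \<Rightarrow> complex" where
  "Lsum i j m H f = fscale (1/2) (\<Sum>h\<in>H. lmul (basis_gen i j (m - h) h) f)"

lemma Lsum_linear: "Lsum i j m H (fscale c f + g) = fscale c (Lsum i j m H f) + Lsum i j m H g"
  unfolding Lsum_def lmul_add lmul_fscale
  by (simp add: fscale_def fun_eq_iff sum_fun_apply sum.distrib sum_distrib_left algebra_simps)

text \<open>The definition of \<open>L\<^sub>r\<^sup>i\<^sup>j(m)\<close> sums over the terms that are nonzero in \<open>M\<^sub>r\<close>;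
  modulo the kernel it agrees with the sum over any finite set containing them.\<close>
lemma Lop_equiv_Lsum:
  assumes "\<not> (i = j \<and> m = 0)" "finite H"
    "\<And>h. h \<notin> H \<Longrightarrow> lmul (basis_gen i j (m - h) h) f \<in> Ker d r"
  shows "Lop d r i j m f - Lsum i j m H f \<in> Ker d r"
proof -
  have act_eq: "act (vv i j (m - h) h) f = lmul (basis_gen i j (m - h) h) f" for h
    using assms(1) by (intro act_vv_basis_gen) auto
  define S where "S = {h. lmul (basis_gen i j (m - h) h) f \<notin> Ker d r}"
  have "Lop d r i j m f = fscale (1/2) (\<Sum>h\<in>S. lmul (basis_gen i j (m - h) h) f)"
    using assms(1) by (simp add: Lop_def act_eq S_def fscale_def sum_fun_apply fun_eq_iff)
  moreover have "(\<Sum>h\<in>H. lmul (basis_gen i j (m - h) h) f)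
      = (\<Sum>h\<in>S. lmul (basis_gen i j (m - h) h) f) + (\<Sum>h\<in>H - S. lmul (basis_gen i j (m - h) h) f)"
    using assms(2,3) by (subst sum.subset_diff[of S H]) (auto simp: S_def add.commute)
  ultimately have "Lop d r i j m f - Lsum i j m H f
      = fscale (- 1/2) (\<Sum>h\<in>H - S. lmul (basis_gen i j (m - h) h) f)"
    unfolding Lsum_def by (simp add: fscale_def fun_eq_iff algebra_simps)
  also have "\<dots> \<in> Ker d r"
    by (intro cfun.subspace_scale[OF Ker_subspace] cfun.subspace_sum[OF Ker_subspace])
      (simp add: S_def)
  finally show ?thesis .
qed

lemma Lop_Ker:
  assumes "\<not> (i = j \<and> m = 0)" "i \<in> {1..d}" "j \<in> {1..d}" "f \<in> Ker d r"
  shows "Lop d r i j m f \<in> Ker d r"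
proof -
  have "Lop d r i j m f - Lsum i j m {} f \<in> Ker d r"
    using lmul_Ker[OF valid_basis_gen[OF assms(2,3)] assms(4)] by (intro Lop_equiv_Lsum[OF assms(1)]) auto
  moreover have "Lsum i j m {} f = 0"
    by (simp add: Lsum_def fscale_def fun_eq_iff)
  ultimately show ?thesis
    by simp
qed

lemma Lop_equiv_Lsum_eventually:
  assumes "\<not> (i = j \<and> m = 0)" "i \<in> {1..d}" "j \<in> {1..d}" "f \<in> word_span d"
  obtains H0 where "finite H0"
    "\<And>H. finite H \<Longrightarrow> H0 \<subseteq> H \<Longrightarrow> Lop d r i j m f - Lsum i j m H f \<in> Ker d r"
proof -
  obtain H0 where H0: "finite H0" "\<forall>h. h \<notin> H0 \<longrightarrow> lmul (basis_gen i j (m - h) h) f \<in> Ker d r"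
    using finite_support[OF assms(4,2,3)] by blast
  show ?thesis
  proof (rule that[OF H0(1)])
    fix H assume "finite H" "H0 \<subseteq> H"
    with H0(2) show "Lop d r i j m f - Lsum i j m H f \<in> Ker d r"
      by (intro Lop_equiv_Lsum[OF assms(1)]) auto
  qed
qed

lemma Lop_linear_mod_Ker:
  assumes "\<not> (i = j \<and> m = 0)" "i \<in> {1..d}" "j \<in> {1..d}" "f \<in> word_span d" "g \<in> word_span d"
  shows "Lop d r i j m (fscale c f + g) - (fscale c (Lop d r i j m f) + Lop d r i j m g) \<in> Ker d r"
proof -
  have "fscale c f + g \<in> word_span d"
    using assms(4,5) by (intro cfun.subspace_add[OF word_span_subspace] cfun.subspace_scale[OF word_span_subspace])
  obtain H1 where H1: "finite H1"
    "\<And>H. finite H \<Longrightarrow> H1 \<subseteq> H \<Longrightarrow> Lop d r i j m (fscale c f + g) - Lsum i j m H (fscale c f + g) \<in> Ker d r"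
    using Lop_equiv_Lsum_eventually[OF assms(1-3) \<open>fscale c f + g \<in> word_span d\<close>] by blast
  obtain H2 where H2: "finite H2"
    "\<And>H. finite H \<Longrightarrow> H2 \<subseteq> H \<Longrightarrow> Lop d r i j m f - Lsum i j m H f \<in> Ker d r"
    using Lop_equiv_Lsum_eventually[OF assms(1-4)] by blast
  obtain H3 where H3: "finite H3"
    "\<And>H. finite H \<Longrightarrow> H3 \<subseteq> H \<Longrightarrow> Lop d r i j m g - Lsum i j m H g \<in> Ker d r"
    using Lop_equiv_Lsum_eventually[OF assms(1-3,5)] by blast
  define H where "H = H1 \<union> H2 \<union> H3"
  have "finite H" "H1 \<subseteq> H" "H2 \<subseteq> H" "H3 \<subseteq> H"
    using H1(1) H2(1) H3(1) by (auto simp: H_def)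
  note K = H1(2)[OF this(1,2)] H2(2)[OF this(1,3)] H3(2)[OF this(1,4)]
  have "Lop d r i j m (fscale c f + g) - (fscale c (Lop d r i j m f) + Lop d r i j m g)
      = (Lop d r i j m (fscale c f + g) - Lsum i j m H (fscale c f + g))
        - (fscale c (Lop d r i j m f - Lsum i j m H f) + (Lop d r i j m g - Lsum i j m H g))"
    unfolding Lsum_linear by (simp add: fscale_def fun_eq_iff algebra_simps)
  also have "\<dots> \<in> Ker d r"
    by (rule cfun.subspace_diff[OF Ker_subspace K(1)
          cfun.subspace_add[OF Ker_subspace cfun.subspace_scale[OF Ker_subspace K(2)] K(3)]])
  finally show ?thesis .
qed

text \<open>A vector of \<open>M\<^sub>r\<close> lies in \<open>V\<^sub>J\<close> iff its representatives lie in \<open>VJ_Ker\<close>.\<close>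
definition VJ_Ker :: "nat \<Rightarrow> complex \<Rightarrow> (gen list \<Rightarrow> complex) set" where
  "VJ_Ker d r = cfun.span (Lvecs d r \<union> Ker d r)"

lemma VJ_Ker_subspace: "cfun.subspace (VJ_Ker d r)"
  unfolding VJ_Ker_def by simp

lemma Ker_subset_VJ_Ker: "f \<in> Ker d r \<Longrightarrow> f \<in> VJ_Ker d r"
  unfolding VJ_Ker_def by (simp add: cfun.span_base)

lemma Lvecs_subset_VJ_Ker: "f \<in> Lvecs d r \<Longrightarrow> f \<in> VJ_Ker d r"
  unfolding VJ_Ker_def by (simp add: cfun.span_base)

lemma VJ_Ker_equiv: "f - g \<in> Ker d r \<Longrightarrow> g \<in> VJ_Ker d r \<Longrightarrow> f \<in> VJ_Ker d r"
  using cfun.subspace_add[OF VJ_Ker_subspace Ker_subset_VJ_Ker] by fastforce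

lemma VJ_Ker_decompose:
  assumes "f \<in> VJ_Ker d r"
  obtains g where "g \<in> cfun.span (Lvecs d r)" "f - g \<in> Ker d r"
proof -
  obtain g k where gk: "f = g + k" "g \<in> cfun.span (Lvecs d r)" "k \<in> cfun.span (Ker d r)"
    using assms unfolding VJ_Ker_def cfun.span_Un by blast
  have "k \<in> Ker d r"
    using gk(3) cfun.span_eq_iff[THEN iffD2, OF Ker_subspace] by simp
  with gk(1,2) show ?thesis
    by (intro that[of g]) simp_all
qed

lemma Lop_VJ_Ker:
  assumes "\<not> (i = j \<and> m = 0)" "i \<in> {1..d}" "j \<in> {1..d}" "f \<in> VJ_Ker d r"
  shows "Lop d r i j m f \<in> VJ_Ker d r"
proof -
  from assms(4)[unfolded VJ_Ker_def] have "f \<in> word_span d \<and> Lop d r i j m f \<in> VJ_Ker d r"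
  proof (induction rule: cfun.span_induct_alt)
    case base
    have "0 \<in> Ker d r" by (rule cfun.subspace_0[OF Ker_subspace])
    then show ?case
      using Lop_Ker[OF assms(1-3)] Ker_subset_VJ_Ker cfun.subspace_0[OF word_span_subspace] by blast
  next
    case (step c x y)
    have x: "x \<in> word_span d" "Lop d r i j m x \<in> VJ_Ker d r"
      using step.hyps(1) Lvecs_subset_word_span Ker_subset_word_span
        Lop_Lvecs[OF _ assms(2,3)] Lop_Ker[OF assms(1-3)] Lvecs_subset_VJ_Ker Ker_subset_VJ_Ker
      by blast+
    have "fscale c (Lop d r i j m x) + Lop d r i j m y \<in> VJ_Ker d r"
      using x(2) step.IH by (intro cfun.subspace_add[OF VJ_Ker_subspace] cfun.subspace_scale[OF VJ_Ker_subspace]) auto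
    then have "Lop d r i j m (fscale c x + y) \<in> VJ_Ker d r"
      using VJ_Ker_equiv Lop_linear_mod_Ker[OF assms(1-3) x(1)] step.IH by blast
    moreover have "fscale c x + y \<in> word_span d"
      using x(1) step.IH
      by (intro cfun.subspace_add[OF word_span_subspace] cfun.subspace_scale[OF word_span_subspace]) auto
    ultimately show ?case by blast
  qed
  then show ?thesis ..
qed

section \<open>Negative words lie in \<open>V\<^sub>J\<close>\<close>

definition reached :: "nat \<Rightarrow> complex \<Rightarrow> nat \<Rightarrow> bool" where
  "reached d r n \<longleftrightarrow> (\<forall>X. neg_word d X \<and> length X = n \<longrightarrow> wd X \<in> VJ_Ker d r)"

definition extenders :: "nat \<Rightarrow> complex \<Rightarrow> nat \<Rightarrow> (gen \<Rightarrow> complex) set" where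
  "extenders d r n = {z. \<forall>X. neg_word d X \<and> length X = n \<longrightarrow> act z (wd X) \<in> VJ_Ker d r}"

lemma extenders_subspace: "cfun.subspace (extenders d r n)"
proof (rule cfun.subspaceI)
  show "0 \<in> extenders d r n"
    unfolding extenders_def by (simp add: act_zero cfun.subspace_0[OF VJ_Ker_subspace])
  show "x + y \<in> extenders d r n" if "x \<in> extenders d r n" "y \<in> extenders d r n" for x y
    using that unfolding extenders_def by (simp add: act_add cfun.subspace_add[OF VJ_Ker_subspace])
  show "fscale c x \<in> extenders d r n" if "x \<in> extenders d r n" for c x
    using that unfolding extenders_def by (simp add: act_fscale cfun.subspace_scale[OF VJ_Ker_subspace])
qed

lemma delta_extender_iff:
  "delta y \<in> extenders d r n \<longleftrightarrow> (\<forall>X. neg_word d X \<and> length X = n \<longrightarrow> wd (y # X) \<in> VJ_Ker d r)"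
  by (simp add: extenders_def act_delta)

lemma negspan_subset_VJ_Ker: "reached d r n \<Longrightarrow> negspan d r {n} \<subseteq> VJ_Ker d r"
  unfolding negspan_def reached_def
  by (rule cfun.span_minimal[OF _ VJ_Ker_subspace]) (auto intro: Ker_subset_VJ_Ker)

lemma lmul_negspan_VJ_Ker:
  assumes "delta y \<in> extenders d r n" "valid_gen d y" "f \<in> negspan d r {n}"
  shows "lmul y f \<in> VJ_Ker d r"
  using assms(3)[unfolded negspan_def]
proof (rule lmul_span_subset[OF _ _ VJ_Ker_subspace])
  fix x assume "x \<in> {wd X | X. neg_word d X \<and> length X \<in> {n}} \<union> Ker d r"
  then consider X where "x = wd X" "neg_word d X" "length X = n" | "x \<in> Ker d r"
    by blast
  then show "lmul y x \<in> VJ_Ker d r"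
  proof cases
    case 1
    then show ?thesis using assms(1) by (simp add: delta_extender_iff)
  next
    case 2
    then show ?thesis using lmul_Ker[OF assms(2)] Ker_subset_VJ_Ker by blast
  qed
qed

lemma Lsum_Bplus_nonpos_in_negspan:
  assumes "neg_word d X" "m \<le> 0" "\<forall>h\<in>A. \<not> (m < h \<and> h < 0)" "i \<in> {1..d}" "j \<in> {1..d}"
  shows "Lsum i j m A (wd X) \<in> negspan d r {length X}"
  unfolding Lsum_def lmul_wd using assms
  by (intro cfun.subspace_scale[OF negspan_subspace] cfun.subspace_sum[OF negspan_subspace]
      Bplus_nonpos_word_in_negspan valid_basis_gen Bplus_nonpos_basis_gen) auto

lemma Lop_word_equiv_Lsum:
  assumes "valid_word d X" "\<not> (i = j \<and> m = 0)" "i \<in> {1..d}" "j \<in> {1..d}"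
    "finite H" "mode_window m X \<subseteq> H"
  shows "Lop d r i j m (wd X) - Lsum i j m H (wd X) \<in> Ker d r"
proof (rule Lop_equiv_Lsum[OF assms(2,5)])
  fix h assume "h \<notin> H"
  with assms(6) show "lmul (basis_gen i j (m - h) h) (wd X) \<in> Ker d r"
    by (intro lmul_outside_mode_window_in_Ker[OF assms(1,3,4)]) blast
qed

lemma Lsum_split: "finite H \<Longrightarrow> A \<subseteq> H \<Longrightarrow> Lsum i j m H f = Lsum i j m A f + Lsum i j m (H - A) f"
  by (simp add: Lsum_def sum.subset_diff fscale_def fun_eq_iff sum_fun_apply algebra_simps)

definition c_elem :: "nat \<Rightarrow> nat \<Rightarrow> int \<Rightarrow> gen \<Rightarrow> complex" where
  "c_elem i j m = fscale (1/2) (\<Sum>h\<in>{m<..<0}. delta (basis_gen i j (m - h) h))"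

lemma act_c_elem: "act (c_elem i j m) f = Lsum i j m {m<..<0} f"
  unfolding c_elem_def Lsum_def act_fscale act_sum act_delta ..

lemma c_elem_extender:
  assumes "reached d r n" "i \<in> {1..d}" "j \<in> {1..d}" "m < 0"
  shows "c_elem i j m \<in> extenders d r n"
  unfolding extenders_def
proof (intro CollectI allI impI, elim conjE)
  fix X assume X: "neg_word d X" "length X = n"
  define H where "H = mode_window m X"
  have H: "finite H" "{m<..<0} \<subseteq> H"
    by (simp_all add: H_def finite_mode_window) (auto simp: mode_window_def)
  have L: "Lop d r i j m (wd X) \<in> VJ_Ker d r"
    using assms X by (intro Lop_VJ_Ker) (auto simp: reached_def)
  have K: "Lop d r i j m (wd X) - Lsum i j m H (wd X) \<in> Ker d r"
    using assms X H by (intro Lop_word_equiv_Lsum) (auto simp: neg_word_def H_def)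
  have R: "Lsum i j m (H - {m<..<0}) (wd X) \<in> VJ_Ker d r"
    using negspan_subset_VJ_Ker[OF assms(1)] Lsum_Bplus_nonpos_in_negspan[OF X(1), of m "H - {m<..<0}"]
      assms(2-4) X(2) by auto
  have "act (c_elem i j m) (wd X)
      = Lop d r i j m (wd X) - (Lop d r i j m (wd X) - Lsum i j m H (wd X)) - Lsum i j m (H - {m<..<0}) (wd X)"
    unfolding act_c_elem Lsum_split[OF H] by simp
  also have "\<dots> \<in> VJ_Ker d r"
    by (rule cfun.subspace_diff[OF VJ_Ker_subspace
          cfun.subspace_diff[OF VJ_Ker_subspace L Ker_subset_VJ_Ker[OF K]] R])
  finally show "act (c_elem i j m) (wd X) \<in> VJ_Ker d r" .
qed

lemma Lsum_Cons_equiv: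
  assumes "valid_word d X" "valid_gen d y" "i \<in> {1..d}" "j \<in> {1..d}"
  shows "Lsum i j m H (wd (y # X))
      - (lmul y (Lsum i j m H (wd X)) + act (fscale (1/2) (\<Sum>h\<in>H. brk r (basis_gen i j (m - h) h) y)) (wd X))
    \<in> Ker d r"
proof -
  have comm: "lmul (basis_gen i j (m - h) h) (wd (y # X))
      - (lmul y (lmul (basis_gen i j (m - h) h) (wd X)) + act (brk r (basis_gen i j (m - h) h) y) (wd X))
    \<in> Ker d r" for h
  proof -
    have "wd ([] @ basis_gen i j (m - h) h # y # X) - wd ([] @ y # basis_gen i j (m - h) h # X)
        - ins [] (brk r (basis_gen i j (m - h) h) y) X \<in> Ker d r"
      using assms by (intro commutator_in_Ker valid_basis_gen) auto
    then show ?thesis by (simp add: act_wd diff_diff_eq)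
  qed
  have "Lsum i j m H (wd (y # X))
      - (lmul y (Lsum i j m H (wd X)) + act (fscale (1/2) (\<Sum>h\<in>H. brk r (basis_gen i j (m - h) h) y)) (wd X))
    = fscale (1/2) (\<Sum>h\<in>H. lmul (basis_gen i j (m - h) h) (wd (y # X))
      - (lmul y (lmul (basis_gen i j (m - h) h) (wd X)) + act (brk r (basis_gen i j (m - h) h) y) (wd X)))"
    unfolding Lsum_def act_fscale lmul_fscale lmul_sum act_sum
    by (simp add: fscale_def fun_eq_iff sum_fun_apply sum_subtractf sum.distrib algebra_simps)
  also have "\<dots> \<in> Ker d r"
    using comm by (intro cfun.subspace_scale[OF Ker_subspace] cfun.subspace_sum[OF Ker_subspace])
  finally show ?thesis .
qed

text \<open>For \<open>m \<in> {-1, 0}\<close> no mode lies strictly between \<open>m\<close> and \<open>0\<close>, so \<open>L\<^sub>r\<^sup>i\<^sup>j(m) X\<close> straightens to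
  negative words of length \<open>|X|\<close>; then \<open>L\<^sub>r\<^sup>i\<^sup>j(m) (y X) \<equiv> y L\<^sub>r\<^sup>i\<^sup>j(m) X + [L\<^sub>r\<^sup>i\<^sup>j(m), y] X\<close> puts the
  bracket term in \<open>V\<^sub>J\<close>.\<close>
lemma bracket_extender:
  assumes "valid_gen d y" "delta y \<in> extenders d r n"
    "m \<in> {-1, 0}" "\<not> (i = j \<and> m = 0)" "i \<in> {1..d}" "j \<in> {1..d}" "finite H0"
    "\<And>h. h \<notin> H0 \<Longrightarrow> brk r (basis_gen i j (m - h) h) y = 0"
  shows "fscale (1/2) (\<Sum>h\<in>H0. brk r (basis_gen i j (m - h) h) y) \<in> extenders d r n"
  unfolding extenders_def
proof (intro CollectI allI impI, elim conjE)
  fix X assume X: "neg_word d X" "length X = n"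
  then have vX: "valid_word d X" "valid_word d (y # X)"
    using assms(1) by (auto simp: neg_word_def)
  define H where "H = H0 \<union> mode_window m X \<union> mode_window m (y # X)"
  let ?z = "fscale (1/2) (\<Sum>h\<in>H0. brk r (basis_gen i j (m - h) h) y)"
  have H: "finite H" "mode_window m (y # X) \<subseteq> H"
    using assms(7) finite_mode_window by (auto simp: H_def)
  have "(\<Sum>h\<in>H. brk r (basis_gen i j (m - h) h) y) = (\<Sum>h\<in>H0. brk r (basis_gen i j (m - h) h) y)"
    using H(1) assms(8) by (intro sum.mono_neutral_right) (auto simp: H_def)
  then have z: "?z = fscale (1/2) (\<Sum>h\<in>H. brk r (basis_gen i j (m - h) h) y)"
    by simp
  have yX: "wd (y # X) \<in> VJ_Ker d r"
    using assms(2) X by (simp add: delta_extender_iff)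
  have L: "Lop d r i j m (wd (y # X)) \<in> VJ_Ker d r"
    by (rule Lop_VJ_Ker[OF assms(4-6) yX])
  have K1: "Lop d r i j m (wd (y # X)) - Lsum i j m H (wd (y # X)) \<in> Ker d r"
    by (rule Lop_word_equiv_Lsum[OF vX(2) assms(4-6) H])
  have K2: "Lsum i j m H (wd (y # X)) - (lmul y (Lsum i j m H (wd X)) + act ?z (wd X)) \<in> Ker d r"
    unfolding z by (rule Lsum_Cons_equiv[OF vX(1) assms(1,5,6)])
  have "Lsum i j m H (wd X) \<in> negspan d r {n}"
    using Lsum_Bplus_nonpos_in_negspan[OF X(1), of m H] assms(3,5,6) X(2) by auto
  then have P: "lmul y (Lsum i j m H (wd X)) \<in> VJ_Ker d r"
    by (rule lmul_negspan_VJ_Ker[OF assms(2,1)])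
  have "act ?z (wd X) = Lop d r i j m (wd (y # X))
      - (Lop d r i j m (wd (y # X)) - Lsum i j m H (wd (y # X)))
      - (Lsum i j m H (wd (y # X)) - (lmul y (Lsum i j m H (wd X)) + act ?z (wd X)))
      - lmul y (Lsum i j m H (wd X))"
    by simp
  also have "\<dots> \<in> VJ_Ker d r"
    by (intro cfun.subspace_diff[OF VJ_Ker_subspace] L P Ker_subset_VJ_Ker K1 K2)
  finally show "act ?z (wd X) \<in> VJ_Ker d r" .
qed

lemma raise_extender:
  assumes "k \<noteq> l" "k \<in> {1..d}" "l \<in> {1..d}" "a < 0" "b < 0"
    "delta (basis_gen k l a b) \<in> extenders d r n"
  shows "delta (basis_gen k l (a - 1) b) \<in> extenders d r n"
proof -
  have "fscale (1/2) (\<Sum>h\<in>{-a, a - 1}. brk r (basis_gen k k (-1 - h) h) (basis_gen k l a b))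
      \<in> extenders d r n"
    using assms brk_raise[OF assms(1,4,5)]
    by (intro bracket_extender valid_basis_gen) auto
  moreover have "fscale (1/2) (\<Sum>h\<in>{-a, a - 1}. brk r (basis_gen k k (-1 - h) h) (basis_gen k l a b))
      = fscale (- of_int a) (delta (basis_gen k l (a - 1) b))"
    using assms(4) by (simp add: brk_raise[OF assms(1,4,5)] fscale_def fun_eq_iff)
  ultimately have "fscale (- 1 / of_int a) (fscale (- of_int a) (delta (basis_gen k l (a - 1) b)))
      \<in> extenders d r n"
    by (metis cfun.subspace_scale[OF extenders_subspace])
  then show ?thesis
    using assms(4) by (simp add: fscale_def)
qed

lemma raise_extender_below:
  assumes "k \<noteq> l" "k \<in> {1..d}" "l \<in> {1..d}" "a' \<le> a" "a < 0" "b < 0"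
    "delta (basis_gen k l a b) \<in> extenders d r n"
  shows "delta (basis_gen k l a' b) \<in> extenders d r n"
  using assms(4)
proof (induction a' rule: int_le_induct)
  case (step a')
  then show ?case using raise_extender[OF assms(1-3) _ assms(6)] assms(5) by simp
qed (rule assms(7))

lemma c_elem_minus_two: "c_elem i j (-2) = fscale (1/2) (delta (basis_gen i j (-1) (-1)))"
proof -
  have "{-2<..<0::int} = {-1}" by auto
  then show ?thesis by (simp add: c_elem_def)
qed

lemma mixed_extender:
  assumes "reached d r n" "k \<noteq> l" "k \<in> {1..d}" "l \<in> {1..d}" "a < 0" "b < 0"
  shows "delta (basis_gen k l a b) \<in> extenders d r n"
proof -
  have corner: "delta (basis_gen i j (-1) (-1)) \<in> extenders d r n"
    if "i \<in> {1..d}" "j \<in> {1..d}" for i j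
  proof -
    have "fscale 2 (c_elem i j (-2)) \<in> extenders d r n"
      using assms(1) that by (intro cfun.subspace_scale[OF extenders_subspace] c_elem_extender) auto
    moreover have "fscale 2 (c_elem i j (-2)) = delta (basis_gen i j (-1) (-1))"
      unfolding c_elem_minus_two by (simp add: fscale_def fun_eq_iff)
    ultimately show ?thesis by simp
  qed
  have "delta (basis_gen k l a (-1)) \<in> extenders d r n"
    by (rule raise_extender_below[OF assms(2-4) _ _ _ corner[OF assms(3,4)]]) (use assms(5) in auto)
  then have lk: "delta (basis_gen l k (-1) a) \<in> extenders d r n"
    by (simp add: basis_gen_swap)
  have "delta (basis_gen l k b a) \<in> extenders d r n"
    by (rule raise_extender_below[OF assms(2)[symmetric] assms(4,3) _ _ _ lk]) (use assms(5,6) in auto)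
  then show ?thesis
    by (simp add: basis_gen_swap)
qed

lemma swap_extender:
  assumes "reached d r n" "k \<noteq> l" "k \<in> {1..d}" "l \<in> {1..d}" "a < 0" "b < 0"
  shows "fscale (of_int a) (delta (basis_gen l l a b)) + fscale (of_int b) (delta (basis_gen k k a b))
    \<in> extenders d r n"
proof -
  have "fscale (1/2) (\<Sum>h\<in>{a, -b}. brk r (basis_gen k l (0 - h) h) (basis_gen k l a b)) \<in> extenders d r n"
    using assms brk_swap[OF assms(2,5,6)]
    by (intro bracket_extender valid_basis_gen mixed_extender) auto
  moreover have "fscale (1/2) (\<Sum>h\<in>{a, -b}. brk r (basis_gen k l (0 - h) h) (basis_gen k l a b))
      = fscale (- 1/2) (fscale (of_int a) (delta (basis_gen l l a b))
          + fscale (of_int b) (delta (basis_gen k k a b)))"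
    using assms(5,6) by (simp add: brk_swap[OF assms(2,5,6)] fscale_def fun_eq_iff algebra_simps)
  moreover have "fscale (-2) (fscale (- 1/2) v) = v" for v :: "gen \<Rightarrow> complex"
    by (simp add: fscale_def)
  ultimately show ?thesis
    by (metis cfun.subspace_scale[OF extenders_subspace])
qed

lemma other_index: "2 \<le> d \<Longrightarrow> k \<in> {1..d} \<Longrightarrow> \<exists>l \<in> {1..d::nat}. l \<noteq> k"
  by (rule bexI[of _ "if k = 1 then 2 else 1"]) auto

text \<open>Swapping in both orders gives \<open>a L + b K\<close> and \<open>b L + a K\<close>, a system that is
  invertible because \<open>a\<^sup>2 \<noteq> b\<^sup>2\<close>.\<close>
lemma diagonal_extender_distinct:
  assumes "reached d r n" "2 \<le> d" "k \<in> {1..d}" "a < 0" "b < 0" "a \<noteq> b"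
  shows "delta (basis_gen k k a b) \<in> extenders d r n"
proof -
  obtain l where l: "l \<in> {1..d}" "k \<noteq> l"
    using other_index[OF assms(2,3)] by blast
  define K where "K = delta (basis_gen k k a b)"
  define L where "L = delta (basis_gen l l a b)"
  have V1: "fscale (of_int a) L + fscale (of_int b) K \<in> extenders d r n"
    unfolding K_def L_def by (rule swap_extender[OF assms(1) l(2) assms(3) l(1) assms(4,5)])
  have "fscale (of_int b) (delta (basis_gen l l b a)) + fscale (of_int a) (delta (basis_gen k k b a))
      \<in> extenders d r n"
    by (rule swap_extender[OF assms(1) l(2) assms(3) l(1) assms(5,4)])
  moreover have "basis_gen l l b a = basis_gen l l a b" "basis_gen k k b a = basis_gen k k a b"
    by (rule basis_gen_swap)+
  ultimately have V2: "fscale (of_int b) L + fscale (of_int a) K \<in> extenders d r n"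
    unfolding K_def L_def by simp
  have "a\<^sup>2 \<noteq> b\<^sup>2"
    using assms(4-6) by (auto simp: power2_eq_iff)
  then have ne: "(of_int a :: complex)\<^sup>2 - (of_int b)\<^sup>2 \<noteq> 0"
    unfolding right_minus_eq of_int_power[symmetric] of_int_eq_iff .
  have "fscale (1 / ((of_int a)^2 - (of_int b)^2))
      (fscale (of_int a) (fscale (of_int b) L + fscale (of_int a) K)
        + fscale (- of_int b) (fscale (of_int a) L + fscale (of_int b) K)) \<in> extenders d r n"
    by (rule cfun.subspace_scale[OF extenders_subspace cfun.subspace_add[OF extenders_subspace
          cfun.subspace_scale[OF extenders_subspace V2] cfun.subspace_scale[OF extenders_subspace V1]]])
  moreover have "fscale (1 / ((of_int a)^2 - (of_int b)^2))
      (fscale (of_int a) (fscale (of_int b) L + fscale (of_int a) K)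
        + fscale (- of_int b) (fscale (of_int a) L + fscale (of_int b) K)) = K"
    using ne by (simp add: fscale_def fun_eq_iff field_simps power2_eq_square)
  ultimately show ?thesis
    by (simp add: K_def)
qed

lemma diagonal_extender_equal:
  assumes "reached d r n" "2 \<le> d" "k \<in> {1..d}" "a < 0"
  shows "delta (basis_gen k k a a) \<in> extenders d r n"
proof -
  let ?S = "{2 * a<..<0}"
  have a: "a \<in> ?S" using assms(4) by auto
  have "c_elem k k (2 * a) \<in> extenders d r n"
    using assms by (intro c_elem_extender) auto
  moreover have "(\<Sum>h\<in>?S - {a}. delta (basis_gen k k (2 * a - h) h)) \<in> extenders d r n"
    using assms by (intro cfun.subspace_sum[OF extenders_subspace] diagonal_extender_distinct) auto
  moreover have "delta (basis_gen k k a a)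
      = fscale 2 (c_elem k k (2 * a)) - (\<Sum>h\<in>?S - {a}. delta (basis_gen k k (2 * a - h) h))"
    unfolding c_elem_def sum.remove[OF finite_greaterThanLessThan_int a]
    by (simp add: fscale_def fun_eq_iff field_simps)
  ultimately show ?thesis
    by (simp add: cfun.subspace_diff[OF extenders_subspace] cfun.subspace_scale[OF extenders_subspace])
qed

lemma negative_extender:
  assumes "reached d r n" "2 \<le> d" "valid_gen d y" "negative y"
  shows "delta y \<in> extenders d r n"
proof (cases y)
  case (V i j a b)
  with assms(3,4) have ij: "i \<in> {1..d}" "j \<in> {1..d}" "i < j \<or> i = j \<and> a \<le> b" and ab: "a < 0" "b < 0"
    by auto
  then consider "i < j" | "i = j" "a < b" | "i = j" "a = b"
    by linarith
  then show ?thesis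
  proof cases
    case 1
    then have "y = basis_gen i j a b" using V by (simp add: basis_gen_def)
    with 1 show ?thesis using mixed_extender[OF assms(1) _ ij(1,2) ab] by simp
  next
    case 2
    then have "y = basis_gen i i a b" using V by (simp add: basis_gen_def)
    with 2 show ?thesis using diagonal_extender_distinct[OF assms(1,2) ij(1) ab] by simp
  next
    case 3
    then have "y = basis_gen i i a a" using V by (simp add: basis_gen_def)
    with 3 show ?thesis using diagonal_extender_equal[OF assms(1,2) ij(1) ab(1)] by simp
  qed
qed (use assms(4) in simp)

lemma reached_all: "2 \<le> d \<Longrightarrow> reached d r n"
proof (induction n)
  case 0
  have "wd [] \<in> Lvecs d r"
    unfolding Lvecs_def by (intro CollectI exI[of _ "[]"]) simp
  then show ?case
    by (simp add: reached_def Lvecs_subset_VJ_Ker)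
next
  case (Suc n)
  show ?case unfolding reached_def
  proof (intro allI impI, elim conjE)
    fix X assume "neg_word d X" "length X = Suc n"
    then obtain y X' where "X = y # X'" "valid_gen d y" "negative y" "neg_word d X'" "length X' = n"
      by (cases X) auto
    with negative_extender[OF Suc.IH[OF Suc.prems] Suc.prems] show "wd X \<in> VJ_Ker d r"
      by (simp add: delta_extender_iff)
  qed
qed

lemma negspan_UNIV_subset_VJ_Ker: "2 \<le> d \<Longrightarrow> negspan d r UNIV \<subseteq> VJ_Ker d r"
  unfolding negspan_def
  by (rule cfun.span_minimal[OF _ VJ_Ker_subspace])
    (auto intro: Ker_subset_VJ_Ker dest: reached_all[unfolded reached_def])

theorem proposition3p1:
  fixes d :: nat and r :: complex
  assumes "2 \<le> d"
  shows "\<forall>w. valid_word d w \<longrightarrow> (\<exists>g \<in> cspan (Lvecs d r). (\<lambda>t. wd w t - g t) \<in> Ker d r)"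
proof (intro allI impI)
  fix w assume "valid_word d w"
  then have "wd w \<in> VJ_Ker d r"
    using word_in_negspan negspan_UNIV_subset_VJ_Ker[OF assms] by blast
  then obtain g where "g \<in> cfun.span (Lvecs d r)" "wd w - g \<in> Ker d r"
    by (rule VJ_Ker_decompose)
  then show "\<exists>g \<in> cspan (Lvecs d r). (\<lambda>t. wd w t - g t) \<in> Ker d r"
    unfolding cspan_eq_span fun_diff_def by blast
qed

end
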